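(* Let $\mathcal{X}$ be a finite source alphabet and $\mathcal{Y}$ a finite reproduction alphabet with $|\mathcal{X}|\geq 2$ and $|\mathcal{Y}|\geq 2$, and let $d:\mathcal{X}\times\mathcal{Y}\to\mathbb{R}_{\geq0}$ be a normal distortion measure. Assume there exists at least one source distribution $P_X$ on $\mathcal{X}$ such that the rate distortion function $R(D)$ is not identically zero. Then there exist two distinct source letters $k_1,k_2\in\mathcal{X}$ and two distinct reproduction letters $l_1,l_2\in\mathcal{Y}$ such that $d(k_1,l_1)=0$, $d(k_1,l_2)>0$, $d(k_2,l_2)=0$ and $d(k_2,l_1)>0$.
   Context: A distortion measure $d:\mathcal{X}\times\mathcal{Y}\to\mathbb{R}_{\geq 0}$ is normal if for every $x\in\mathcal{X}$ there is $y\in\mathcal{Y}$ with $d(x,y)=0$. For a source distribution $P_X$ and distortion level $D\geq 0$, the rate distortion function is $R(D)=\inf\{I(X;Y): P_{Y|X},\ \sum_{x,y}P_X(x)P_{Y|X}(y|x)d(x,y)\leq D\}$, the infimum over all transition matrices $P_{Y|X}$, with $I(X;Y)$ the mutual information of $P_XP_{Y|X}$. *)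

theory Defs
  imports Complex_Main
begin

text \<open>Finite alphabets are modelled by finite types 'x (source) and 'y (reproduction).
  Logarithms are natural; the base is immaterial for the statement.\<close>

definition is_distribution :: "('a::finite \<Rightarrow> real) \<Rightarrow> bool" where
  "is_distribution P \<longleftrightarrow> (\<forall>a. P a \<ge> 0) \<and> (\<Sum>a\<in>UNIV. P a) = 1"

definition is_channel :: "('x::finite \<Rightarrow> 'y::finite \<Rightarrow> real) \<Rightarrow> bool" where
  "is_channel W \<longleftrightarrow> (\<forall>x. is_distribution (W x))"

definition output_dist :: "('x::finite \<Rightarrow> real) \<Rightarrow> ('x \<Rightarrow> 'y::finite \<Rightarrow> real) \<Rightarrow> 'y \<Rightarrow> real" where
  "output_dist P W y = (\<Sum>x\<in>UNIV. P x * W x y)"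

definition mutual_info :: "('x::finite \<Rightarrow> real) \<Rightarrow> ('x \<Rightarrow> 'y::finite \<Rightarrow> real) \<Rightarrow> real" where
  "mutual_info P W = (\<Sum>x\<in>UNIV. \<Sum>y\<in>UNIV.
     (if P x * W x y = 0 then 0 else P x * W x y * ln (W x y / output_dist P W y)))"

definition avg_distortion :: "('x::finite \<Rightarrow> real) \<Rightarrow> ('x \<Rightarrow> 'y::finite \<Rightarrow> real) \<Rightarrow> ('x \<Rightarrow> 'y \<Rightarrow> real) \<Rightarrow> real" where
  "avg_distortion P W d = (\<Sum>x\<in>UNIV. \<Sum>y\<in>UNIV. P x * W x y * d x y)"

definition rate_distortion :: "('x::finite \<Rightarrow> real) \<Rightarrow> ('x \<Rightarrow> 'y::finite \<Rightarrow> real) \<Rightarrow> real \<Rightarrow> real" where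
  "rate_distortion P d D =
     Inf {mutual_info P W | W. is_channel W \<and> avg_distortion P W d \<le> D}"

definition normal_distortion :: "('x \<Rightarrow> 'y \<Rightarrow> real) \<Rightarrow> bool" where
  "normal_distortion d \<longleftrightarrow> (\<forall>x. \<exists>y. d x y = 0)"

end

theory Submission
  imports Defs
begin

text \<open>Contrapositive. If no such letters exist, then for any two source letters the sets of
  their zero-distortion reproductions are comparable under inclusion. These finitely many
  nonempty sets form a chain, so the smallest one is contained in all the others: some single
  reproduction letter has distortion 0 for every source letter. The channel that always outputs
  that letter achieves distortion 0 with zero mutual information, and mutual information is
  nonnegative (Gibbs' inequality), so R(D) = 0 for every source distribution and every D \<ge> 0.\<close>

lemma finite_chain_common_element:
  fixes Z :: "'i::finite \<Rightarrow> 'a set"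
  assumes nonempty: "\<And>i. Z i \<noteq> {}"
    and chain: "\<And>i j. Z i \<subseteq> Z j \<or> Z j \<subseteq> Z i"
  shows "\<exists>a. \<forall>i. a \<in> Z i"
proof -
  have "subset.chain UNIV (range Z)"
    using chain by (auto simp: subset.chain_def)
  then have "\<Inter>(range Z) \<in> range Z"
    by (intro Inter_in_chain) auto
  then show ?thesis
    using nonempty by fastforce
qed

lemma mult_ln_div_ge:
  fixes a b :: real
  assumes "0 < a" "0 < b"
  shows "a - b \<le> a * ln (a / b)"
proof -
  have "ln (b / a) \<le> b / a - 1"
    using assms by (intro ln_le_minus_one) simp
  moreover have "ln (a / b) = - ln (b / a)"
    using assms by (simp add: ln_div)
  ultimately have "a * (1 - b / a) \<le> a * ln (a / b)"
    using assms by (intro mult_left_mono) auto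
  moreover have "a * (1 - b / a) = a - b"
    using assms by (simp add: field_simps)
  ultimately show ?thesis
    by simp
qed

lemma output_dist_ge:
  assumes "is_distribution P" "is_channel W"
  shows "P x * W x y \<le> output_dist P W y"
proof -
  have "(\<Sum>x'\<in>{x}. P x' * W x' y) \<le> (\<Sum>x'\<in>UNIV. P x' * W x' y)"
    using assms by (intro sum_mono2) (auto simp: is_channel_def is_distribution_def)
  then show ?thesis
    by (simp add: output_dist_def)
qed

lemma sum_output_dist:
  assumes "is_distribution P" "is_channel W"
  shows "(\<Sum>y\<in>UNIV. output_dist P W y) = 1"
proof -
  have "(\<Sum>y\<in>UNIV. output_dist P W y) = (\<Sum>x\<in>UNIV. P x * (\<Sum>y\<in>UNIV. W x y))"
    unfolding output_dist_def by (subst sum.swap) (simp add: sum_distrib_left)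
  also have "\<dots> = 1"
    using assms by (simp add: is_channel_def is_distribution_def)
  finally show ?thesis .
qed

lemma mutual_info_nonneg:
  assumes P: "is_distribution P" and W: "is_channel W"
  shows "0 \<le> mutual_info P W"
proof -
  let ?q = "output_dist P W"
  have term_ge: "P x * W x y - P x * ?q y
      \<le> (if P x * W x y = 0 then 0 else P x * W x y * ln (W x y / ?q y))" for x y
  proof (cases "P x * W x y = 0")
    case True
    have "0 \<le> P x" "0 \<le> ?q y"
      using P output_dist_ge[OF P W, of x y] True by (auto simp: is_distribution_def)
    then have "0 \<le> P x * ?q y"
      by (rule mult_nonneg_nonneg)
    with True show ?thesis
      unfolding True by simp
  next
    case False
    have "0 \<le> P x" "0 \<le> W x y"
      using P W by (auto simp: is_channel_def is_distribution_def)
    with False have Px: "0 < P x" and PW: "0 < P x * W x y"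
      by (auto simp: less_le)
    with output_dist_ge[OF P W, of x y] have "0 < P x * ?q y"
      by (simp add: mult_pos_pos)
    then have "P x * W x y - P x * ?q y \<le> P x * W x y * ln (P x * W x y / (P x * ?q y))"
      using PW by (rule mult_ln_div_ge[rotated])
    with False Px show ?thesis by simp
  qed
  have row_sum: "(\<Sum>y\<in>UNIV. P x * W x y - P x * ?q y) = 0" for x
    using W sum_output_dist[OF P W]
    by (simp add: sum_subtractf flip: sum_distrib_left add: is_channel_def is_distribution_def)
  have "(\<Sum>x\<in>UNIV. \<Sum>y\<in>UNIV. P x * W x y - P x * ?q y) \<le> mutual_info P W"
    unfolding mutual_info_def by (intro sum_mono term_ge)
  then show ?thesis
    by (simp add: row_sum)
qed

lemma mutual_info_const_channel:
  assumes "is_distribution P"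
  shows "mutual_info P (\<lambda>_. Q) = 0"
proof -
  have output_const: "output_dist P (\<lambda>_. Q) y = Q y" for y
    using assms by (simp add: output_dist_def is_distribution_def flip: sum_distrib_right)
  show ?thesis
    unfolding mutual_info_def output_const by (intro sum.neutral ballI) simp
qed

lemma rate_distortion_eq_0I:
  assumes P: "is_distribution P" and "is_channel W"
    and "avg_distortion P W d \<le> D" and "mutual_info P W = 0"
  shows "rate_distortion P d D = 0"
  unfolding rate_distortion_def
proof (rule cInf_eq_minimum)
  show "0 \<in> {mutual_info P W | W. is_channel W \<and> avg_distortion P W d \<le> D}"
    using assms by (metis (mono_tags, lifting) mem_Collect_eq)
  show "0 \<le> I" if "I \<in> {mutual_info P W | W. is_channel W \<and> avg_distortion P W d \<le> D}" for I
    using that mutual_info_nonneg[OF P] by blast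
qed

lemma rate_distortion_eq_0_if_zero_column:
  assumes "is_distribution P" and "\<forall>x. d x y0 = 0" and "0 \<le> D"
  shows "rate_distortion P d D = 0"
proof (rule rate_distortion_eq_0I)
  let ?W = "\<lambda>_ y. if y = y0 then 1 else 0"
  show "is_channel ?W"
    by (simp add: is_channel_def is_distribution_def)
  have "avg_distortion P ?W d = 0"
    unfolding avg_distortion_def using assms(2) by (intro sum.neutral ballI) simp
  with assms(3) show "avg_distortion P ?W d \<le> D"
    by simp
  show "mutual_info P ?W = 0"
    using assms(1) by (rule mutual_info_const_channel)
qed fact

theorem mainTheorem8:
  fixes d :: "'x::finite \<Rightarrow> 'y::finite \<Rightarrow> real"
  assumes "card (UNIV :: 'x set) \<ge> 2" and "card (UNIV :: 'y set) \<ge> 2"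
    and "\<forall>x y. d x y \<ge> 0"
    and "normal_distortion d"
    and "\<exists>P. is_distribution P \<and> (\<exists>D\<ge>0. rate_distortion P d D \<noteq> 0)"
  shows "\<exists>k1 k2 l1 l2. k1 \<noteq> k2 \<and> l1 \<noteq> l2 \<and> d k1 l1 = 0 \<and> d k1 l2 > 0
           \<and> d k2 l2 = 0 \<and> d k2 l1 > 0"
proof -
  obtain P D where P: "is_distribution P" and D: "0 \<le> D" and R: "rate_distortion P d D \<noteq> 0"
    using assms(5) by blast
  define Z where "Z x = {y. d x y = 0}" for x
  have Z_nonempty: "Z x \<noteq> {}" for x
    using assms(4) by (auto simp: Z_def normal_distortion_def)
  show ?thesis
  proof (rule ccontr)
    assume no_crossing: "\<not> ?thesis"
    have Z_chain: "Z x \<subseteq> Z x' \<or> Z x' \<subseteq> Z x" for x x'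
    proof (rule ccontr)
      assume "\<not> ?thesis"
      then obtain l l' where "d x l = 0" "d x' l' = 0" "d x l' \<noteq> 0" "d x' l \<noteq> 0"
        by (auto simp: Z_def)
      with assms(3) have "x \<noteq> x' \<and> l \<noteq> l' \<and> d x l = 0 \<and> d x l' > 0 \<and> d x' l' = 0 \<and> d x' l > 0"
        by (auto simp: order_less_le)
      with no_crossing show False
        by (elim notE) (intro exI, assumption)
    qed
    have "\<exists>y. \<forall>x. y \<in> Z x"
      by (rule finite_chain_common_element) (fact Z_nonempty, fact Z_chain)
    then obtain y0 where "\<forall>x. y0 \<in> Z x"
      by blast
    then have "rate_distortion P d D = 0"
      by (intro rate_distortion_eq_0_if_zero_column[OF P _ D]) (simp add: Z_def)
    with R show False ..
  qed
qed

end
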